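(* In the setting of the context, let marginal regression select $\{j:|x_j^\top y|>t\}$ with $t=t'\sqrt{2\log p}$ for fixed $t'>0$, and let $\mathrm{FP}_p=\sum_j\mathbb{P}(\beta_j=0,\ j\text{ selected})$, $\mathrm{FN}_p=\sum_j\mathbb{P}(\beta_j=\tau_p,\ j\text{ not selected})$. Then as $p\to\infty$, $\mathrm{FP}_p=L_pp^{1-\min\{t'^2,\ \vartheta+(t'-|\rho|\sqrt r)_+^2\}}$ and $\mathrm{FN}_p=L_pp^{1-\min\{\vartheta+(\sqrt r-t')_+^2,\ 2\vartheta+[(1+\rho)\sqrt r-t']_+^2\}}$.
   Context: Setting: $p\to\infty$; $y=X\beta+z$, $z\sim N(0,I_n)$, $X=[x_1,\dots,x_p]$ with $X^\top X=\mathrm{diag}(B,\dots,B,B_0)$, $B=\begin{pmatrix}1&\rho\\ \rho&1\end{pmatrix}$, $\rho\in(-1,1)$, $B_0=B$ ($p$ even) or $1$ ($p$ odd); $\beta_j$ i.i.d. independent of $z$, $=\tau_p=\sqrt{2r\log p}$ w.p. $p^{-\vartheta}$, $0$ otherwise, $\vartheta\in(0,1)$, $r>0$. $L_p$: generic multi-$\log(p)$ term ($L_pp^{\epsilon}\to\infty$, $L_pp^{-\epsilon}\to0$ for all $\epsilon>0$). *)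

theory Defs
  imports "HOL-Probability.Probability"
begin

text \<open>Gram matrix X^T X = diag(B,...,B,B_0), indices 0..p-1, blocks {2m,2m+1};
  for odd p the last index p-1 forms the 1x1 block B_0 = 1.\<close>
definition block_gram :: "real \<Rightarrow> nat \<Rightarrow> nat \<Rightarrow> real" where
  "block_gram \<rho> j k = (if j = k then 1 else if j div 2 = k div 2 then \<rho> else 0)"

text \<open>Marginal regression score x_j^T y where y = X beta + z
  (X is n x p, given as X i j = entry in row i, column j).\<close>
definition marg_score ::
  "(nat \<Rightarrow> nat \<Rightarrow> real) \<Rightarrow> nat \<Rightarrow> nat \<Rightarrow> (nat \<Rightarrow> 'a \<Rightarrow> real) \<Rightarrow> (nat \<Rightarrow> 'a \<Rightarrow> real)
    \<Rightarrow> nat \<Rightarrow> 'a \<Rightarrow> real" where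
  "marg_score X n p \<beta> z j \<omega> =
     (\<Sum>i<n. X i j * ((\<Sum>k<p. X i k * \<beta> k \<omega>) + z i \<omega>))"

text \<open>A generic multi-log(p) term L_p: L_p p^eps \<rightarrow> \<infinity> and L_p p^(-eps) \<rightarrow> 0 for all eps > 0.
  "f p = L_p p^e" means that f p / p^e is such a term.\<close>
definition multi_log :: "(nat \<Rightarrow> real) \<Rightarrow> bool" where
  "multi_log L \<longleftrightarrow> (\<forall>\<epsilon>>0. filterlim (\<lambda>p. L p * real p powr \<epsilon>) at_top sequentially
                          \<and> (\<lambda>p. L p * real p powr (-\<epsilon>)) \<longlonglongrightarrow> 0)"

end

theory Submission
  imports Defs "HOL-Real_Asymp.Real_Asymp"
begin

text \<open>
  Since the Gram matrix is block diagonal, the marginal score of column \<open>j\<close> is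
  \<open>\<beta>\<^sub>j + \<rho> \<beta>\<^sub>k + w\<^sub>j\<close>, where \<open>k\<close> is the column paired with \<open>j\<close> and \<open>w\<^sub>j\<close> is a standard normal
  variable independent of all coefficients. Conditioning on the two-point values of \<open>\<beta>\<^sub>k\<close>
  writes each per-coordinate error probability exactly as a mixture, with weights \<open>1 - q\<close> and
  \<open>q = p\<^sup>-\<^sup>\<theta>\<close>, of probabilities \<open>P(|a s + Z| > b s)\<close> or \<open>P(|a s + Z| \<le> b s)\<close> with
  \<open>s = \<surd>(2 log p)\<close>. Such a probability is \<open>p^(-d\<^sup>2 + o(1))\<close>, where \<open>d s\<close> is how far \<open>Z\<close>
  must move from 0 for the event to occur, because the Gaussian density at \<open>d s\<close> is
  \<open>p^(-d\<^sup>2)\<close>/\<surd>(2\<pi>).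
  Exponents add under products and take the maximum under sums, and summing over the \<open>p\<close>
  coordinates adds 1 to the exponent; an unpaired last column (odd \<open>p\<close>) only costs a factor 2.
\<close>

section \<open>Polynomial rates\<close>

text \<open>\<open>has_rate f e\<close> says \<open>f p = p^(e + o(1))\<close>, i.e. \<open>f p = L\<^sub>p p\<^sup>e\<close> in the notation of the paper.\<close>

definition has_rate :: "(nat \<Rightarrow> real) \<Rightarrow> real \<Rightarrow> bool" where
  "has_rate f e \<longleftrightarrow>
     (\<forall>\<epsilon>>0. eventually (\<lambda>p. real p powr (e - \<epsilon>) \<le> f p \<and> f p \<le> real p powr (e + \<epsilon>)) sequentially)"

lemma eventually_le_powr:
  assumes "(\<epsilon>::real) > 0"
  shows "eventually (\<lambda>p::nat. C \<le> real p powr \<epsilon>) sequentially"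
proof -
  have "filterlim (\<lambda>p::nat. real p powr \<epsilon>) at_top sequentially"
    using assms by real_asymp
  then show ?thesis by (simp add: filterlim_at_top)
qed

lemma has_rateI:
  assumes lower: "\<And>\<epsilon>. \<epsilon> > 0 \<Longrightarrow> eventually (\<lambda>p. real p powr (e - \<epsilon>) \<le> f p) sequentially"
    and upper: "eventually (\<lambda>p. f p \<le> C * real p powr e) sequentially"
  shows "has_rate f e"
  unfolding has_rate_def
proof (intro allI impI)
  fix \<epsilon> :: real assume \<epsilon>: "\<epsilon> > 0"
  show "eventually (\<lambda>p. real p powr (e - \<epsilon>) \<le> f p \<and> f p \<le> real p powr (e + \<epsilon>)) sequentially"
    using lower[OF \<epsilon>] upper eventually_le_powr[OF \<epsilon>, of C] eventually_gt_at_top[of 0]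
  proof eventually_elim
    case (elim p)
    have "C * real p powr e \<le> real p powr \<epsilon> * real p powr e"
      using elim by (intro mult_right_mono) auto
    also have "\<dots> = real p powr (e + \<epsilon>)"
      by (simp add: powr_add)
    finally show ?case
      using elim by auto
  qed
qed

lemma has_rate_squeeze:
  assumes g: "has_rate g e" and h: "has_rate h e"
    and between: "eventually (\<lambda>p. g p \<le> f p \<and> f p \<le> h p) sequentially"
  shows "has_rate f e"
  unfolding has_rate_def
proof (intro allI impI)
  fix \<epsilon> :: real assume \<epsilon>: "\<epsilon> > 0"
  show "eventually (\<lambda>p. real p powr (e - \<epsilon>) \<le> f p \<and> f p \<le> real p powr (e + \<epsilon>)) sequentially"
    using g[unfolded has_rate_def, rule_format, OF \<epsilon>] h[unfolded has_rate_def, rule_format, OF \<epsilon>] between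
    by eventually_elim auto
qed

lemma has_rate_eventually_pos:
  assumes "has_rate f e"
  shows "eventually (\<lambda>p. 0 < f p) sequentially"
  using assms[unfolded has_rate_def, rule_format, OF zero_less_one] eventually_gt_at_top[of 0]
proof eventually_elim
  case (elim p)
  then show ?case
    using powr_gt_zero[of "real p" "e - 1"] by linarith
qed

lemma has_rate_mult:
  assumes f: "has_rate f a" and g: "has_rate g b"
  shows "has_rate (\<lambda>p. f p * g p) (a + b)"
  unfolding has_rate_def
proof (intro allI impI)
  fix \<epsilon> :: real assume "\<epsilon> > 0"
  then have \<epsilon>2: "\<epsilon>/2 > 0" by simp
  show "eventually (\<lambda>p. real p powr (a + b - \<epsilon>) \<le> f p * g p \<and> f p * g p \<le> real p powr (a + b + \<epsilon>)) sequentially"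
    using f[unfolded has_rate_def, rule_format, OF \<epsilon>2] g[unfolded has_rate_def, rule_format, OF \<epsilon>2]
  proof eventually_elim
    case (elim p)
    have "real p powr (a + b - \<epsilon>) = real p powr (a - \<epsilon>/2) * real p powr (b - \<epsilon>/2)"
      and "real p powr (a + b + \<epsilon>) = real p powr (a + \<epsilon>/2) * real p powr (b + \<epsilon>/2)"
      by (simp_all add: powr_add[symmetric] algebra_simps)
    moreover have "0 \<le> f p" "0 \<le> g p"
      using elim powr_ge_zero[of "real p"] by (meson order_trans)+
    ultimately show ?case
      using elim by (auto intro!: mult_mono)
  qed
qed

lemma has_rate_add:
  assumes f: "has_rate f a" and g: "has_rate g b"
  shows "has_rate (\<lambda>p. f p + g p) (max a b)"
  unfolding has_rate_def
proof (intro allI impI)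
  fix \<epsilon> :: real assume \<epsilon>: "\<epsilon> > 0"
  then have \<epsilon>2: "\<epsilon>/2 > 0" by simp
  show "eventually (\<lambda>p. real p powr (max a b - \<epsilon>) \<le> f p + g p \<and> f p + g p \<le> real p powr (max a b + \<epsilon>)) sequentially"
    using f[unfolded has_rate_def, rule_format, OF \<epsilon>] g[unfolded has_rate_def, rule_format, OF \<epsilon>]
      f[unfolded has_rate_def, rule_format, OF \<epsilon>2] g[unfolded has_rate_def, rule_format, OF \<epsilon>2]
      eventually_le_powr[OF \<epsilon>2, of 2] eventually_ge_at_top[of 1]
  proof eventually_elim
    case (elim p)
    then have p: "1 \<le> real p" by simp
    have "f p \<le> real p powr (max a b + \<epsilon>/2)" "g p \<le> real p powr (max a b + \<epsilon>/2)"
      using elim(3,4) powr_mono[OF _ p, of "a + \<epsilon>/2" "max a b + \<epsilon>/2"]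
        powr_mono[OF _ p, of "b + \<epsilon>/2" "max a b + \<epsilon>/2"] by auto
    moreover have "2 * real p powr (max a b + \<epsilon>/2) \<le> real p powr (\<epsilon>/2) * real p powr (max a b + \<epsilon>/2)"
      using elim(5) by (intro mult_right_mono) auto
    moreover have "real p powr (\<epsilon>/2) * real p powr (max a b + \<epsilon>/2) = real p powr (max a b + \<epsilon>)"
      by (simp add: powr_add[symmetric] algebra_simps)
    moreover have "real p powr (max a b - \<epsilon>) \<le> f p + g p"
    proof -
      have "0 \<le> f p" "0 \<le> g p"
        using elim(1,2) powr_ge_zero[of "real p"] by (meson order_trans)+
      then show ?thesis
        using elim(1,2) by (simp add: max_def)
    qed
    ultimately show ?case by linarith
  qed
qed

lemma has_rate_powr: "has_rate (\<lambda>p. real p powr e) e"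
proof (rule has_rateI[where C = 1])
  fix \<epsilon> :: real assume "\<epsilon> > 0"
  show "eventually (\<lambda>p. real p powr (e - \<epsilon>) \<le> real p powr e) sequentially"
    using eventually_ge_at_top[of 1]
  proof eventually_elim
    case (elim p)
    then show ?case
      using \<open>\<epsilon> > 0\<close> by (intro powr_mono) auto
  qed
qed simp

lemma has_rate_const:
  assumes c: "c > 0"
  shows "has_rate (\<lambda>_. c) 0"
proof (rule has_rateI[where C = c])
  fix \<epsilon> :: real assume "\<epsilon> > 0"
  then have "(\<lambda>p::nat. real p powr (0 - \<epsilon>)) \<longlonglongrightarrow> 0"
    by real_asymp
  then show "eventually (\<lambda>p. real p powr (0 - \<epsilon>) \<le> c) sequentially"
    using c by (rule order_tendstoD(2)[THEN eventually_mono]) simp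
next
  show "eventually (\<lambda>p. c \<le> c * real p powr 0) sequentially"
    using eventually_gt_at_top[of 0] by eventually_elim simp
qed

lemma has_rate_cmult:
  assumes "c > 0" "has_rate f e"
  shows "has_rate (\<lambda>p. c * f p) e"
  using has_rate_mult[OF has_rate_const[OF assms(1)] assms(2)] by simp

lemma has_rate_imp_multi_log:
  assumes "has_rate f e"
  shows "multi_log (\<lambda>p. f p / real p powr e)"
  unfolding multi_log_def
proof (intro allI impI conjI)
  fix \<epsilon> :: real assume "\<epsilon> > 0"
  then have \<epsilon>2: "\<epsilon>/2 > 0" by simp
  have bounds: "eventually (\<lambda>p. real p powr (-\<epsilon>/2) \<le> f p / real p powr e \<and>
      f p / real p powr e \<le> real p powr (\<epsilon>/2)) sequentially"
    using assms[unfolded has_rate_def, rule_format, OF \<epsilon>2] eventually_gt_at_top[of 0]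
  proof eventually_elim
    case (elim p)
    have "real p powr (-\<epsilon>/2) * real p powr e = real p powr (e - \<epsilon>/2)"
      "real p powr (\<epsilon>/2) * real p powr e = real p powr (e + \<epsilon>/2)"
      by (simp_all add: powr_add[symmetric] algebra_simps)
    then show ?case
      using elim by (simp add: divide_simps)
  qed
  have "filterlim (\<lambda>p::nat. real p powr (\<epsilon>/2)) at_top sequentially"
    using \<epsilon>2 by real_asymp
  then show "filterlim (\<lambda>p. f p / real p powr e * real p powr \<epsilon>) at_top sequentially"
  proof (rule filterlim_at_top_mono)
    show "eventually (\<lambda>p. real p powr (\<epsilon>/2) \<le> f p / real p powr e * real p powr \<epsilon>) sequentially"
      using bounds
    proof eventually_elim
      case (elim p)
      have "real p powr (\<epsilon>/2) = real p powr (-\<epsilon>/2) * real p powr \<epsilon>"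
        by (simp add: powr_add[symmetric])
      also have "\<dots> \<le> f p / real p powr e * real p powr \<epsilon>"
        using elim by (intro mult_right_mono) auto
      finally show ?case .
    qed
  qed
  have "(\<lambda>p::nat. real p powr (-(\<epsilon>/2))) \<longlonglongrightarrow> 0"
    using \<epsilon>2 by real_asymp
  then show "(\<lambda>p. f p / real p powr e * real p powr (-\<epsilon>)) \<longlonglongrightarrow> 0"
  proof (rule tendsto_sandwich[OF _ _ tendsto_const, rotated 2])
    show "eventually (\<lambda>p. 0 \<le> f p / real p powr e * real p powr (-\<epsilon>)) sequentially"
      using bounds by eventually_elim (metis mult_nonneg_nonneg order_trans powr_ge_zero)
    show "eventually (\<lambda>p. f p / real p powr e * real p powr (-\<epsilon>) \<le> real p powr (-(\<epsilon>/2))) sequentially"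
      using bounds
    proof eventually_elim
      case (elim p)
      have "f p / real p powr e * real p powr (-\<epsilon>) \<le> real p powr (\<epsilon>/2) * real p powr (-\<epsilon>)"
        using elim by (intro mult_right_mono) auto
      also have "\<dots> = real p powr (-(\<epsilon>/2))"
        by (simp add: powr_add[symmetric])
      finally show ?case .
    qed
  qed
qed

lemma has_rate_linear_sandwich:
  assumes G: "has_rate G e"
    and bounds: "eventually (\<lambda>p. real (p - 1) * G p \<le> S p \<and> S p \<le> 2 * real p * G p) sequentially"
  shows "has_rate S (1 + e)"
proof (rule has_rate_squeeze)
  show "has_rate (\<lambda>p. 1/2 * (real p powr 1 * G p)) (1 + e)"
    by (intro has_rate_cmult has_rate_mult has_rate_powr G) simp
  show "has_rate (\<lambda>p. 2 * (real p powr 1 * G p)) (1 + e)"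
    by (intro has_rate_cmult has_rate_mult has_rate_powr G) simp
  show "eventually (\<lambda>p. 1/2 * (real p powr 1 * G p) \<le> S p \<and> S p \<le> 2 * (real p powr 1 * G p)) sequentially"
    using bounds eventually_ge_at_top[of 2] has_rate_eventually_pos[OF G]
  proof eventually_elim
    case (elim p)
    then have "real p powr 1 = real p"
      by simp
    moreover have "real p / 2 * G p \<le> real (p - 1) * G p"
      using elim by (intro mult_right_mono) (auto simp: of_nat_diff)
    ultimately show ?case
      using elim(1) by (auto simp: mult.assoc)
  qed
qed

section \<open>Gaussian tails at the scale \<open>\<surd>(2 log p)\<close>\<close>

abbreviation sqrt_2ln :: "nat \<Rightarrow> real" where
  "sqrt_2ln p \<equiv> sqrt (2 * ln (real p))"

lemma sqrt_2ln_nonneg: "0 \<le> sqrt_2ln p"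
  by (cases "p = 0") auto

lemma eventually_le_mult_sqrt_2ln:
  assumes "c > 0"
  shows "eventually (\<lambda>p. K \<le> c * sqrt_2ln p) sequentially"
proof -
  have "filterlim (\<lambda>p::nat. c * sqrt_2ln p) at_top sequentially"
    using assms by real_asymp
  then show ?thesis
    by (simp add: filterlim_at_top)
qed

interpretation std_normal: prob_space std_normal_distribution
  using real_dist_normal_dist by (simp add: real_distribution_def)

lemma emeasure_std_normal:
  "A \<in> sets borel \<Longrightarrow>
    emeasure std_normal_distribution A = (\<integral>\<^sup>+x. ennreal (std_normal_density x) * indicator A x \<partial>lborel)"
  by (simp add: emeasure_density)

lemma std_normal_upper_tail_le:
  assumes a: "a \<ge> 1"
  shows "measure std_normal_distribution {a..} \<le> exp (-a\<^sup>2/2)"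
proof -
  have "std_normal_density x \<le> x * std_normal_density x" if "a \<le> x" for x
    using a that mult_right_mono[of 1 x "std_normal_density x"] normal_density_nonneg by simp
  then have "emeasure std_normal_distribution {a..}
      \<le> (\<integral>\<^sup>+x. ennreal (x * std_normal_density x) * indicator {a..} x \<partial>lborel)"
    unfolding emeasure_std_normal[OF atLeast_borel]
    by (intro nn_integral_mono) (auto simp: indicator_def intro!: ennreal_leI)
  also have "\<dots> = ennreal (0 - (- std_normal_density a))"
  proof (rule nn_integral_FTC_atLeast)
    show "(\<lambda>x. x * std_normal_density x) \<in> borel_measurable borel"
      by measurable
    show "DERIV (\<lambda>x. - std_normal_density x) x :> x * std_normal_density x" for x
      unfolding std_normal_density_def
      by (auto intro!: derivative_eq_intros simp: field_simps power2_eq_square)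
    show "0 \<le> x * std_normal_density x" if "a \<le> x" for x
      using a that by auto
    show "((\<lambda>x. - std_normal_density x) \<longlongrightarrow> 0) at_top"
      unfolding std_normal_density_def by real_asymp
  qed
  finally have "measure std_normal_distribution {a..} \<le> std_normal_density a"
    by (simp add: measure_def enn2real_leI)
  also have "\<dots> \<le> exp (-a\<^sup>2/2)"
    using pi_gt3 by (simp add: std_normal_density_def divide_le_eq real_le_rsqrt)
  finally show ?thesis .
qed

lemma std_normal_measure_uminus:
  assumes A: "A \<in> sets borel"
  shows "measure std_normal_distribution (uminus -` A) = measure std_normal_distribution A"
proof -
  have "uminus -` A \<in> sets borel"
    using measurable_sets[OF borel_measurable_uminus[OF measurable_ident] A] by simp
  then have "emeasure std_normal_distribution (uminus -` A)
      = (\<integral>\<^sup>+x. ennreal (std_normal_density (- x)) * indicator A (- x) \<partial>lborel)"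
    by (subst emeasure_std_normal) (auto simp: std_normal_density_def indicator_def)
  also have "\<dots> = (\<integral>\<^sup>+x. ennreal (std_normal_density x) * indicator A x \<partial>distr lborel borel uminus)"
    using A by (subst nn_integral_distr) auto
  also have "\<dots> = emeasure std_normal_distribution A"
    using A by (simp add: lborel_distr_uminus emeasure_std_normal)
  finally show ?thesis
    by (simp add: measure_def)
qed

lemma std_normal_two_sided_tail_le:
  assumes a: "a \<ge> 1"
  shows "measure std_normal_distribution {x. a \<le> \<bar>x\<bar>} \<le> 2 * exp (-a\<^sup>2/2)"
proof -
  have "{x. a \<le> \<bar>x\<bar>} = {a..} \<union> {..-a}"
    by auto
  then have "measure std_normal_distribution {x. a \<le> \<bar>x\<bar>}
      \<le> measure std_normal_distribution {a..} + measure std_normal_distribution {..-a}"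
    by (simp add: measure_Un_le)
  also have "{..-a} = uminus -` {a..}"
    by auto
  also have "measure std_normal_distribution {a..} + measure std_normal_distribution \<dots>
      \<le> 2 * exp (-a\<^sup>2/2)"
    using std_normal_upper_tail_le[OF a] by (simp add: std_normal_measure_uminus)
  finally show ?thesis .
qed

lemma std_normal_density_antimono:
  assumes "\<bar>x\<bar> \<le> \<bar>y\<bar>"
  shows "std_normal_density y \<le> std_normal_density x"
proof -
  have "x\<^sup>2 \<le> y\<^sup>2"
    using assms abs_ge_zero power_mono by (metis power2_abs)
  then show ?thesis
    unfolding std_normal_density_def by (intro mult_left_mono) auto
qed

lemma std_normal_unit_interval_ge:
  "std_normal_density (\<bar>u\<bar> + 1) \<le> measure std_normal_distribution {u..u+1}"
proof -
  have density_le: "std_normal_density (\<bar>u\<bar> + 1) \<le> std_normal_density x" if "x \<in> {u..u+1}" for x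
    using that by (intro std_normal_density_antimono) auto
  have "ennreal (std_normal_density (\<bar>u\<bar> + 1))
      = (\<integral>\<^sup>+x. ennreal (std_normal_density (\<bar>u\<bar> + 1)) * indicator {u..u+1} x \<partial>lborel)"
    by (simp add: nn_integral_cmult_indicator)
  also have "\<dots> \<le> (\<integral>\<^sup>+x. ennreal (std_normal_density x) * indicator {u..u+1} x \<partial>lborel)"
    using density_le by (intro nn_integral_mono) (auto intro!: ennreal_leI simp: indicator_def)
  also have "\<dots> = ennreal (measure std_normal_distribution {u..u+1})"
    by (simp add: emeasure_std_normal[symmetric] std_normal.emeasure_eq_measure)
  finally show ?thesis
    by (simp add: ennreal_le_iff)
qed

lemma exp_neg_sq_sqrt_2ln:
  assumes "p \<ge> 1"
  shows "exp (-(c * sqrt_2ln p)\<^sup>2/2) = real p powr (-c\<^sup>2)"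
  using assms by (simp add: power_mult_distrib powr_def)

lemma eventually_powr_le_std_normal_density:
  assumes \<epsilon>: "\<epsilon> > 0"
  shows "eventually (\<lambda>p. real p powr (-d\<^sup>2 - \<epsilon>) \<le> std_normal_density (d * sqrt_2ln p + k)) sequentially"
proof -
  have "eventually (\<lambda>p::nat. 2 * \<bar>d * k\<bar> * sqrt 2 * sqrt (ln (real p)) + (k\<^sup>2/2 + ln (sqrt (2*pi)))
      \<le> \<epsilon> * ln (real p)) sequentially"
    using \<epsilon> by real_asymp
  then show ?thesis
    using eventually_ge_at_top[of 1]
  proof eventually_elim
    case (elim p)
    have "sqrt_2ln p * sqrt_2ln p = 2 * ln (real p)"
      using elim(2) by simp
    then have "(d * sqrt_2ln p + k)\<^sup>2 / 2 = d\<^sup>2 * ln (real p) + d * k * sqrt_2ln p + k\<^sup>2/2"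
      by (simp add: power2_eq_square algebra_simps)
    moreover have "d * k * sqrt_2ln p \<le> \<bar>d * k\<bar> * sqrt 2 * sqrt (ln (real p))"
      using mult_right_mono[OF abs_ge_self[of "d * k"] real_sqrt_ge_zero[of "ln (real p)"]] elim(2)
      by (simp add: real_sqrt_mult mult_ac)
    moreover have "0 \<le> \<bar>d * k\<bar> * sqrt 2 * sqrt (ln (real p))"
      using elim(2) by simp
    ultimately have "(-d\<^sup>2 - \<epsilon>) * ln (real p) \<le> - (d * sqrt_2ln p + k)\<^sup>2 / 2 - ln (sqrt (2*pi))"
      using elim(1) by (simp add: algebra_simps)
    then have "exp ((-d\<^sup>2 - \<epsilon>) * ln (real p)) \<le> exp (- (d * sqrt_2ln p + k)\<^sup>2 / 2 - ln (sqrt (2*pi)))"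
      by simp
    then show ?case
      using elim(2) by (simp add: powr_def std_normal_density_def exp_diff)
  qed
qed

lemma has_rate_std_normal_measure:
  fixes A :: "nat \<Rightarrow> real set"
  assumes d: "d \<ge> 0" and A: "\<And>p. A p \<in> sets borel"
    and inner: "eventually (\<lambda>p. \<exists>u. \<bar>u\<bar> \<le> d * sqrt_2ln p + k \<and> {u..u+1} \<subseteq> A p) sequentially"
    and outer: "eventually (\<lambda>p. A p \<subseteq> {x. d * sqrt_2ln p \<le> \<bar>x\<bar>}) sequentially"
  shows "has_rate (\<lambda>p. measure std_normal_distribution (A p)) (-d\<^sup>2)"
proof (rule has_rateI[where C = 2])
  fix \<epsilon> :: real assume "\<epsilon> > 0"
  show "eventually (\<lambda>p. real p powr (-d\<^sup>2 - \<epsilon>) \<le> measure std_normal_distribution (A p)) sequentially"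
    using eventually_powr_le_std_normal_density[OF \<open>\<epsilon> > 0\<close>, of d "k + 1"] inner
  proof eventually_elim
    case (elim p)
    then obtain u where u: "\<bar>u\<bar> \<le> d * sqrt_2ln p + k" "{u..u+1} \<subseteq> A p"
      by blast
    have "std_normal_density (d * sqrt_2ln p + (k + 1)) \<le> std_normal_density (\<bar>u\<bar> + 1)"
      using u(1) by (intro std_normal_density_antimono) auto
    also have "\<dots> \<le> measure std_normal_distribution {u..u+1}"
      by (rule std_normal_unit_interval_ge)
    also have "\<dots> \<le> measure std_normal_distribution (A p)"
      using u(2) A by (intro std_normal.finite_measure_mono) auto
    finally show ?case
      using elim(1) by linarith
  qed
next
  show "eventually (\<lambda>p. measure std_normal_distribution (A p) \<le> 2 * real p powr (-d\<^sup>2)) sequentially"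
  proof (cases "d = 0")
    case True
    show ?thesis
      using eventually_gt_at_top[of 0] by eventually_elim (simp add: True order_trans[OF std_normal.prob_le_1])
  next
    case False
    with d have "d > 0"
      by simp
    show ?thesis
      using eventually_le_mult_sqrt_2ln[OF \<open>d > 0\<close>, of 1]
        outer eventually_ge_at_top[of 1]
    proof eventually_elim
      case (elim p)
      have "measure std_normal_distribution (A p)
          \<le> measure std_normal_distribution {x. d * sqrt_2ln p \<le> \<bar>x\<bar>}"
        using elim(2) by (intro std_normal.finite_measure_mono) auto
      also have "\<dots> \<le> 2 * exp (-(d * sqrt_2ln p)\<^sup>2/2)"
        using elim(1) by (rule std_normal_two_sided_tail_le)
      also have "\<dots> = 2 * real p powr (-d\<^sup>2)"
        using exp_neg_sq_sqrt_2ln[of p d] elim(3) by simp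
      finally show ?case .
    qed
  qed
qed

definition shifted_tail_prob :: "real \<Rightarrow> real \<Rightarrow> nat \<Rightarrow> real" where
  "shifted_tail_prob a b p =
     measure std_normal_distribution {x. b * sqrt_2ln p < \<bar>a * sqrt_2ln p + x\<bar>}"

definition shifted_core_prob :: "real \<Rightarrow> real \<Rightarrow> nat \<Rightarrow> real" where
  "shifted_core_prob a b p =
     measure std_normal_distribution {x. \<bar>a * sqrt_2ln p + x\<bar> \<le> b * sqrt_2ln p}"

lemma has_rate_shifted_tail_prob:
  assumes b: "b > 0"
  shows "has_rate (shifted_tail_prob a b) (-(max 0 (b - \<bar>a\<bar>))\<^sup>2)"
  unfolding shifted_tail_prob_def
proof (rule has_rate_std_normal_measure[where k = 2])
  define d where "d = max 0 (b - \<bar>a\<bar>)"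
  show "0 \<le> max 0 (b - \<bar>a\<bar>)"
    by simp
  show "{x. b * sqrt_2ln p < \<bar>a * sqrt_2ln p + x\<bar>} \<in> sets borel" for p
    by measurable
  show "eventually (\<lambda>p. \<exists>u. \<bar>u\<bar> \<le> max 0 (b - \<bar>a\<bar>) * sqrt_2ln p + 2 \<and>
      {u..u+1} \<subseteq> {x. b * sqrt_2ln p < \<bar>a * sqrt_2ln p + x\<bar>}) sequentially"
  proof (intro always_eventually allI)
    fix p :: nat
    have ds: "0 \<le> d * sqrt_2ln p"
      using sqrt_2ln_nonneg[of p] by (simp add: d_def)
    have bs: "b * sqrt_2ln p \<le> \<bar>a\<bar> * sqrt_2ln p + d * sqrt_2ln p"
      using sqrt_2ln_nonneg[of p] mult_right_mono[of b "\<bar>a\<bar> + d" "sqrt_2ln p"]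
      by (simp add: d_def distrib_right)
    define u where "u = (if 0 \<le> a then d * sqrt_2ln p + 1 else -(d * sqrt_2ln p + 2))"
    have "b * sqrt_2ln p < \<bar>a * sqrt_2ln p + x\<bar>" if "x \<in> {u..u+1}" for x
    proof (cases "0 \<le> a")
      case True
      then have "b * sqrt_2ln p < a * sqrt_2ln p + x"
        using that bs by (simp add: u_def)
      then show ?thesis
        by linarith
    next
      case False
      then have "a * sqrt_2ln p + x < - (b * sqrt_2ln p)"
        using that bs by (simp add: u_def)
      then show ?thesis
        by linarith
    qed
    moreover have "\<bar>u\<bar> \<le> d * sqrt_2ln p + 2"
      using ds by (simp add: u_def)
    ultimately show "\<exists>u. \<bar>u\<bar> \<le> max 0 (b - \<bar>a\<bar>) * sqrt_2ln p + 2 \<and>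
        {u..u+1} \<subseteq> {x. b * sqrt_2ln p < \<bar>a * sqrt_2ln p + x\<bar>}"
      unfolding d_def by blast
  qed
  show "eventually (\<lambda>p. {x. b * sqrt_2ln p < \<bar>a * sqrt_2ln p + x\<bar>}
      \<subseteq> {x. max 0 (b - \<bar>a\<bar>) * sqrt_2ln p \<le> \<bar>x\<bar>}) sequentially"
  proof (intro always_eventually allI subsetI)
    fix p :: nat and x assume "x \<in> {x. b * sqrt_2ln p < \<bar>a * sqrt_2ln p + x\<bar>}"
    moreover have "\<bar>a * sqrt_2ln p + x\<bar> \<le> \<bar>a\<bar> * sqrt_2ln p + \<bar>x\<bar>"
      using abs_triangle_ineq[of "a * sqrt_2ln p" x] sqrt_2ln_nonneg[of p] by (simp add: abs_mult)
    ultimately have "(b - \<bar>a\<bar>) * sqrt_2ln p \<le> \<bar>x\<bar>"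
      by (simp add: algebra_simps)
    then show "x \<in> {x. max 0 (b - \<bar>a\<bar>) * sqrt_2ln p \<le> \<bar>x\<bar>}"
      by (simp add: max_def)
  qed
qed

lemma has_rate_shifted_core_prob:
  assumes a: "a > 0" and b: "b > 0"
  shows "has_rate (shifted_core_prob a b) (-(max 0 (a - b))\<^sup>2)"
  unfolding shifted_core_prob_def
proof (rule has_rate_std_normal_measure[where k = 1])
  define d where "d = max 0 (a - b)"
  show "0 \<le> max 0 (a - b)"
    by simp
  show "{x. \<bar>a * sqrt_2ln p + x\<bar> \<le> b * sqrt_2ln p} \<in> sets borel" for p
    by measurable
  have "a + b - d > 0"
    using a b by (simp add: d_def)
  show "eventually (\<lambda>p. \<exists>u. \<bar>u\<bar> \<le> max 0 (a - b) * sqrt_2ln p + 1 \<and>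
      {u..u+1} \<subseteq> {x. \<bar>a * sqrt_2ln p + x\<bar> \<le> b * sqrt_2ln p}) sequentially"
    using eventually_le_mult_sqrt_2ln[OF \<open>a + b - d > 0\<close>, of 1]
  proof eventually_elim
    case (elim p)
    have s: "0 \<le> d * sqrt_2ln p" "(a - d) * sqrt_2ln p \<le> b * sqrt_2ln p"
      using sqrt_2ln_nonneg[of p] by (auto simp: d_def intro!: mult_right_mono)
    let ?u = "-(d * sqrt_2ln p) - 1"
    have "\<bar>?u\<bar> \<le> d * sqrt_2ln p + 1" "{?u..?u+1} \<subseteq> {x. \<bar>a * sqrt_2ln p + x\<bar> \<le> b * sqrt_2ln p}"
      using s elim by (auto simp: algebra_simps abs_if)
    then show ?case
      unfolding d_def by blast
  qed
  show "eventually (\<lambda>p. {x. \<bar>a * sqrt_2ln p + x\<bar> \<le> b * sqrt_2ln p}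
      \<subseteq> {x. max 0 (a - b) * sqrt_2ln p \<le> \<bar>x\<bar>}) sequentially"
  proof (intro always_eventually allI subsetI)
    fix p :: nat and x assume "x \<in> {x. \<bar>a * sqrt_2ln p + x\<bar> \<le> b * sqrt_2ln p}"
    then have "(a - b) * sqrt_2ln p \<le> \<bar>x\<bar>"
      by (simp add: algebra_simps abs_le_iff) linarith
    then show "x \<in> {x. max 0 (a - b) * sqrt_2ln p \<le> \<bar>x\<bar>}"
      by (simp add: max_def)
  qed
qed

section \<open>Independent coefficients and noise\<close>

lemma (in prob_space) prob_indep_blocks:
  assumes ind: "indep_vars N V I" and JK: "J \<inter> K = {}" "J \<subseteq> I" "K \<subseteq> I"
    and P: "Measurable.pred (PiM J N) P" and Q: "Measurable.pred (PiM K N) Q"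
  shows "prob {\<omega> \<in> space M. P (restrict (\<lambda>i. V i \<omega>) J) \<and> Q (restrict (\<lambda>i. V i \<omega>) K)}
       = prob {\<omega> \<in> space M. P (restrict (\<lambda>i. V i \<omega>) J)} * prob {\<omega> \<in> space M. Q (restrict (\<lambda>i. V i \<omega>) K)}"
proof -
  have "indep_var (count_space UNIV) (P \<circ> (\<lambda>\<omega>. restrict (\<lambda>i. V i \<omega>) J))
      (count_space UNIV) (Q \<circ> (\<lambda>\<omega>. restrict (\<lambda>i. V i \<omega>) K))"
    using indep_var_restrict[OF ind JK] P Q by (rule indep_var_compose)
  from indep_varD[OF this, of "{True}" "{True}"] show ?thesis
    by (simp add: vimage_def Int_def conj_ac)
qed

lemma (in prob_space) prob_split_two_values:
  fixes Y :: "'a \<Rightarrow> real"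
  assumes Y: "Y \<in> borel_measurable M" and E: "E \<in> events" and uv: "u \<noteq> v"
    and total: "prob {\<omega> \<in> space M. Y \<omega> = u} + prob {\<omega> \<in> space M. Y \<omega> = v} = 1"
  shows "prob E = prob (E \<inter> {\<omega>. Y \<omega> = u}) + prob (E \<inter> {\<omega>. Y \<omega> = v})"
proof -
  define U where "U = {\<omega> \<in> space M. Y \<omega> = u}"
  define V where "V = {\<omega> \<in> space M. Y \<omega> = v}"
  have "U \<in> events" "V \<in> events"
    unfolding U_def V_def using Y by measurable
  moreover have "U \<inter> V = {}"
    using uv by (auto simp: U_def V_def)
  ultimately have UV: "U \<in> events" "V \<in> events" "U \<inter> V = {}" .
  then have "prob (space M - (U \<union> V)) = 0"
    using total by (simp add: prob_compl finite_measure_Union U_def V_def)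
  moreover have "prob (E - (U \<union> V)) \<le> prob (space M - (U \<union> V))"
    using sets.sets_into_space[OF E] UV by (intro finite_measure_mono) auto
  ultimately have "prob (E - (U \<union> V)) = 0"
    using measure_nonneg[of M "E - (U \<union> V)"] by linarith
  then have "prob E = prob (E \<inter> (U \<union> V))"
    using E UV finite_measure_Diff'[of E "U \<union> V"] by simp
  also have "\<dots> = prob (E \<inter> U) + prob (E \<inter> V)"
    using E UV by (subst finite_measure_Union[symmetric]) (auto simp: Int_Un_distrib)
  finally have "prob E = prob (E \<inter> U) + prob (E \<inter> V)" .
  moreover have "E \<inter> U = E \<inter> {\<omega>. Y \<omega> = u}" "E \<inter> V = E \<inter> {\<omega>. Y \<omega> = v}"
    using sets.sets_into_space[OF E] by (auto simp: U_def V_def)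
  ultimately show ?thesis
    by simp
qed

locale coefficients_and_noise = prob_space M for M :: "'a measure" +
  fixes \<beta> z :: "nat \<Rightarrow> 'a \<Rightarrow> real" and p n :: nat
  assumes indep: "indep_vars (\<lambda>_. borel) (case_sum \<beta> z) ({..<p} <+> {..<n})"
    and noise: "\<And>i. i < n \<Longrightarrow> distributed M lborel (z i) (\<lambda>x. ennreal (std_normal_density x))"
begin

lemma prob_coefficient_noise:
  assumes j: "j < p" and A: "A \<in> sets borel" and C: "C \<in> sets borel"
  shows "prob {\<omega> \<in> space M. \<beta> j \<omega> \<in> A \<and> (\<Sum>i<n. c i * z i \<omega>) \<in> C}
       = prob {\<omega> \<in> space M. \<beta> j \<omega> \<in> A} * prob {\<omega> \<in> space M. (\<Sum>i<n. c i * z i \<omega>) \<in> C}"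
proof -
  have "prob {\<omega> \<in> space M. restrict (\<lambda>v. case_sum \<beta> z v \<omega>) {Inl j} (Inl j) \<in> A \<and>
        (\<Sum>i<n. c i * restrict (\<lambda>v. case_sum \<beta> z v \<omega>) (Inr ` {..<n}) (Inr i)) \<in> C}
      = prob {\<omega> \<in> space M. restrict (\<lambda>v. case_sum \<beta> z v \<omega>) {Inl j} (Inl j) \<in> A} *
        prob {\<omega> \<in> space M. (\<Sum>i<n. c i * restrict (\<lambda>v. case_sum \<beta> z v \<omega>) (Inr ` {..<n}) (Inr i)) \<in> C}"
  proof (rule prob_indep_blocks[OF indep])
    show "{Inl j} \<inter> Inr ` {..<n} = {}" "{Inl j} \<subseteq> {..<p} <+> {..<n}" "Inr ` {..<n} \<subseteq> {..<p} <+> {..<n}"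
      using j by auto
    show "Measurable.pred (PiM {Inl j} (\<lambda>_. borel)) (\<lambda>h. h (Inl j) \<in> A)"
      using A by measurable
    show "Measurable.pred (PiM (Inr ` {..<n}) (\<lambda>_. borel)) (\<lambda>h. (\<Sum>i<n. c i * h (Inr i)) \<in> C)"
      using C by measurable
  qed
  moreover have "restrict (\<lambda>v. case_sum \<beta> z v \<omega>) {Inl j} (Inl j) = \<beta> j \<omega>" for \<omega>
    by simp
  moreover have "(\<Sum>i<n. c i * restrict (\<lambda>v. case_sum \<beta> z v \<omega>) (Inr ` {..<n}) (Inr i)) = (\<Sum>i<n. c i * z i \<omega>)"
    for \<omega> by (intro sum.cong) auto
  ultimately show ?thesis
    by (simp only:)
qed

lemma prob_two_coefficients_noise:
  assumes j: "j < p" and k: "k < p" "k \<noteq> j"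
    and A: "A \<in> sets borel" and B: "B \<in> sets borel" and C: "C \<in> sets borel"
  shows "prob {\<omega> \<in> space M. \<beta> j \<omega> \<in> A \<and> \<beta> k \<omega> \<in> B \<and> (\<Sum>i<n. c i * z i \<omega>) \<in> C}
       = prob {\<omega> \<in> space M. \<beta> j \<omega> \<in> A} * prob {\<omega> \<in> space M. \<beta> k \<omega> \<in> B}
         * prob {\<omega> \<in> space M. (\<Sum>i<n. c i * z i \<omega>) \<in> C}"
proof -
  let ?V = "\<lambda>\<omega> J. restrict (\<lambda>v. case_sum \<beta> z v \<omega>) J"
  have restrict_noise: "(\<Sum>i<n. c i * ?V \<omega> (Inr ` {..<n}) (Inr i)) = (\<Sum>i<n. c i * z i \<omega>)" for \<omega>
    by (intro sum.cong) auto
  have "prob {\<omega> \<in> space M. (?V \<omega> {Inl j, Inl k} (Inl j) \<in> A \<and> ?V \<omega> {Inl j, Inl k} (Inl k) \<in> B) \<and>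
        (\<Sum>i<n. c i * ?V \<omega> (Inr ` {..<n}) (Inr i)) \<in> C}
      = prob {\<omega> \<in> space M. ?V \<omega> {Inl j, Inl k} (Inl j) \<in> A \<and> ?V \<omega> {Inl j, Inl k} (Inl k) \<in> B} *
        prob {\<omega> \<in> space M. (\<Sum>i<n. c i * ?V \<omega> (Inr ` {..<n}) (Inr i)) \<in> C}"
  proof (rule prob_indep_blocks[OF indep])
    show "{Inl j, Inl k} \<inter> Inr ` {..<n} = {}" "{Inl j, Inl k} \<subseteq> {..<p} <+> {..<n}"
      "Inr ` {..<n} \<subseteq> {..<p} <+> {..<n}"
      using j k by auto
    show "Measurable.pred (PiM {Inl j, Inl k} (\<lambda>_. borel)) (\<lambda>h. h (Inl j) \<in> A \<and> h (Inl k) \<in> B)"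
      using A B by measurable
    show "Measurable.pred (PiM (Inr ` {..<n}) (\<lambda>_. borel)) (\<lambda>h. (\<Sum>i<n. c i * h (Inr i)) \<in> C)"
      using C by measurable
  qed
  moreover have "prob {\<omega> \<in> space M. ?V \<omega> {Inl j} (Inl j) \<in> A \<and> ?V \<omega> {Inl k} (Inl k) \<in> B}
      = prob {\<omega> \<in> space M. ?V \<omega> {Inl j} (Inl j) \<in> A} * prob {\<omega> \<in> space M. ?V \<omega> {Inl k} (Inl k) \<in> B}"
  proof (rule prob_indep_blocks[OF indep])
    show "{Inl j} \<inter> {Inl k} = {}" "{Inl j} \<subseteq> {..<p} <+> {..<n}" "{Inl k} \<subseteq> {..<p} <+> {..<n}"
      using j k by auto
    show "Measurable.pred (PiM {Inl j} (\<lambda>_. borel)) (\<lambda>h. h (Inl j) \<in> A)"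
      using A by measurable
    show "Measurable.pred (PiM {Inl k} (\<lambda>_. borel)) (\<lambda>h. h (Inl k) \<in> B)"
      using B by measurable
  qed
  moreover have "?V \<omega> {Inl j, Inl k} (Inl j) = \<beta> j \<omega>" "?V \<omega> {Inl j, Inl k} (Inl k) = \<beta> k \<omega>"
    "?V \<omega> {Inl j} (Inl j) = \<beta> j \<omega>" "?V \<omega> {Inl k} (Inl k) = \<beta> k \<omega>" for \<omega>
    by simp_all
  ultimately show ?thesis
    by (simp only: restrict_noise conj_assoc)
qed

lemma indep_noise_terms: "indep_vars (\<lambda>_. borel) (\<lambda>i \<omega>. c i * z i \<omega>) {..<n}"
proof -
  have "indep_vars (\<lambda>i. PiM {Inr i} (\<lambda>_. borel)) (\<lambda>i \<omega>. restrict (\<lambda>v. case_sum \<beta> z v \<omega>) {Inr i}) {..<n}"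
    by (rule indep_vars_restrict[OF indep]) (auto simp: disjoint_family_on_def)
  then have "indep_vars (\<lambda>_. borel) (\<lambda>i \<omega>. c i * restrict (\<lambda>v. case_sum \<beta> z v \<omega>) {Inr i} (Inr i)) {..<n}"
    by (rule indep_vars_compose2[where Y = "\<lambda>i h. c i * h (Inr i)"]) measurable
  then show ?thesis
    by simp
qed

lemma distributed_weighted_noise:
  assumes c: "(\<Sum>i<n. c i * c i) = 1"
  shows "distributed M lborel (\<lambda>\<omega>. \<Sum>i<n. c i * z i \<omega>) (\<lambda>x. ennreal (std_normal_density x))"
proof -
  define I where "I = {i. i < n \<and> c i \<noteq> 0}"
  have I: "finite I" "I \<subseteq> {..<n}"
    by (auto simp: I_def)
  have sum_I: "(\<Sum>i\<in>I. f i) = (\<Sum>i<n. f i)" if "\<And>i. c i = 0 \<Longrightarrow> f i = 0" for f :: "nat \<Rightarrow> real"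
    using that by (intro sum.mono_neutral_left) (auto simp: I_def)
  have "I \<noteq> {}"
    using c sum_I[of "\<lambda>i. c i * c i"] by auto
  moreover have "distributed M lborel (\<lambda>\<omega>. c i * z i \<omega>) (normal_density 0 \<bar>c i\<bar>)" if "i \<in> I" for i
  proof -
    have "i < n" "c i \<noteq> 0"
      using that by (auto simp: I_def)
    then show ?thesis
      using normal_density_affine[OF noise[OF \<open>i < n\<close>], where \<alpha> = "c i" and \<beta> = 0] by simp
  qed
  ultimately have "distributed M lborel (\<lambda>\<omega>. \<Sum>i\<in>I. c i * z i \<omega>)
      (normal_density (\<Sum>i\<in>I. 0) (sqrt (\<Sum>i\<in>I. \<bar>c i\<bar>\<^sup>2)))"
    using indep_vars_subset[OF indep_noise_terms I(2)] I(1)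
    by (intro sum_indep_normal) (auto simp: I_def)
  moreover have "(\<Sum>i\<in>I. \<bar>c i\<bar>\<^sup>2) = 1"
    using c sum_I[of "\<lambda>i. c i * c i"] by (simp add: power2_eq_square)
  moreover have "(\<lambda>\<omega>. \<Sum>i\<in>I. c i * z i \<omega>) = (\<lambda>\<omega>. \<Sum>i<n. c i * z i \<omega>)"
    using sum_I by auto
  ultimately show ?thesis
    by simp
qed

lemma prob_weighted_noise:
  assumes c: "(\<Sum>i<n. c i * c i) = 1" and C: "C \<in> sets borel"
  shows "prob {\<omega> \<in> space M. (\<Sum>i<n. c i * z i \<omega>) \<in> C} = measure std_normal_distribution C"
proof -
  have "emeasure M ((\<lambda>\<omega>. \<Sum>i<n. c i * z i \<omega>) -` C \<inter> space M) = emeasure std_normal_distribution C"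
    using distributed_emeasure[OF distributed_weighted_noise[OF c], of C] C by (simp add: emeasure_std_normal)
  moreover have "(\<lambda>\<omega>. \<Sum>i<n. c i * z i \<omega>) -` C \<inter> space M = {\<omega> \<in> space M. (\<Sum>i<n. c i * z i \<omega>) \<in> C}"
    by auto
  ultimately show ?thesis
    by (simp add: measure_def)
qed

end

section \<open>The marginal score\<close>

lemma sum_bounds_all_but_last:
  fixes f :: "nat \<Rightarrow> real"
  assumes p: "p \<ge> 1" and eq: "\<And>j. j < p - 1 \<Longrightarrow> f j = F"
    and bounded: "\<And>j. j < p \<Longrightarrow> 0 \<le> f j \<and> f j \<le> 2 * F"
  shows "real (p - 1) * F \<le> (\<Sum>j<p. f j) \<and> (\<Sum>j<p. f j) \<le> 2 * real p * F"
proof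
  have "real (p - 1) * F = (\<Sum>j<p - 1. f j)"
    using eq by simp
  also have "\<dots> \<le> (\<Sum>j<p. f j)"
    using bounded by (intro sum_mono2) auto
  finally show "real (p - 1) * F \<le> (\<Sum>j<p. f j)" .
  have "(\<Sum>j<p. f j) \<le> (\<Sum>j<p. 2 * F)"
    using bounded by (intro sum_mono) auto
  then show "(\<Sum>j<p. f j) \<le> 2 * real p * F"
    by simp
qed

text \<open>For odd \<open>p\<close> the last column has partner \<open>p\<close>, outside the design.\<close>

definition partner :: "nat \<Rightarrow> nat" where
  "partner j = (if even j then j + 1 else j - 1)"

lemma partner_neq: "partner j \<noteq> j"
  by (auto simp: partner_def elim: oddE)

lemma partner_le_Suc: "partner j \<le> j + 1"
  by (auto simp: partner_def)

lemma block_gram_off_diagonal: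
  assumes "k \<noteq> j"
  shows "block_gram \<rho> j k = (if k = partner j then \<rho> else 0)"
  using assms unfolding block_gram_def partner_def by (auto elim!: evenE oddE)

locale marginal_regression_model = coefficients_and_noise +
  fixes X :: "nat \<Rightarrow> nat \<Rightarrow> real" and \<rho> \<tau> q :: real
  assumes gram: "\<And>j k. j < p \<Longrightarrow> k < p \<Longrightarrow> (\<Sum>i<n. X i j * X i k) = block_gram \<rho> j k"
    and prob_beta_tau: "\<And>j. j < p \<Longrightarrow> prob {\<omega> \<in> space M. \<beta> j \<omega> = \<tau>} = q"
    and prob_beta_zero: "\<And>j. j < p \<Longrightarrow> prob {\<omega> \<in> space M. \<beta> j \<omega> = 0} = 1 - q"
    and tau_nonzero: "\<tau> \<noteq> 0"
begin

lemma marg_score_eq: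
  assumes j: "j < p"
  shows "marg_score X n p \<beta> z j \<omega>
    = \<beta> j \<omega> + (if partner j < p then \<rho> * \<beta> (partner j) \<omega> else 0) + (\<Sum>i<n. X i j * z i \<omega>)"
proof -
  have "marg_score X n p \<beta> z j \<omega> = (\<Sum>k<p. (\<Sum>i<n. X i j * X i k) * \<beta> k \<omega>) + (\<Sum>i<n. X i j * z i \<omega>)"
    unfolding marg_score_def
    by (simp add: distrib_left sum.distrib sum_distrib_left sum_distrib_right mult.assoc sum.swap[of _ "{..<n}"])
  also have "(\<Sum>k<p. (\<Sum>i<n. X i j * X i k) * \<beta> k \<omega>) = (\<Sum>k<p. block_gram \<rho> j k * \<beta> k \<omega>)"
    using gram j by (intro sum.cong) auto
  also have "\<dots> = block_gram \<rho> j j * \<beta> j \<omega> + (\<Sum>k\<in>{..<p} - {j}. block_gram \<rho> j k * \<beta> k \<omega>)"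
    using j by (subst sum.remove[of _ j]) auto
  also have "(\<Sum>k\<in>{..<p} - {j}. block_gram \<rho> j k * \<beta> k \<omega>)
      = (\<Sum>k\<in>{..<p} - {j}. if k = partner j then \<rho> * \<beta> (partner j) \<omega> else 0)"
    by (intro sum.cong) (auto simp: block_gram_off_diagonal)
  also have "(\<Sum>k\<in>{..<p} - {j}. if k = partner j then \<rho> * \<beta> (partner j) \<omega> else 0)
      = (if partner j < p then \<rho> * \<beta> (partner j) \<omega> else 0)"
    using partner_neq[of j] by (simp add: sum.delta)
  finally show ?thesis
    by (simp add: block_gram_def)
qed

lemma coefficient_measurable: "j < p \<Longrightarrow> \<beta> j \<in> borel_measurable M"
  using indep unfolding indep_vars_def by (metis InlI lessThan_iff sum.case(1))

lemma noise_weights_normalized: "j < p \<Longrightarrow> (\<Sum>i<n. X i j * X i j) = 1"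
  using gram[of j j] by (simp add: block_gram_def)

lemma prob_score_unpaired:
  assumes j: "j < p" and unpaired: "\<not> partner j < p" and D: "D \<in> sets borel"
  shows "prob {\<omega> \<in> space M. \<beta> j \<omega> = a \<and> marg_score X n p \<beta> z j \<omega> \<in> D}
       = prob {\<omega> \<in> space M. \<beta> j \<omega> = a} * measure std_normal_distribution {x. a + x \<in> D}"
proof -
  have D': "{x. a + x \<in> D} \<in> sets borel"
    using D by measurable
  have "prob {\<omega> \<in> space M. \<beta> j \<omega> = a \<and> marg_score X n p \<beta> z j \<omega> \<in> D}
      = prob {\<omega> \<in> space M. \<beta> j \<omega> \<in> {a} \<and> (\<Sum>i<n. X i j * z i \<omega>) \<in> {x. a + x \<in> D}}"
    using marg_score_eq[OF j] unpaired by (intro arg_cong[where f = prob]) auto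
  also have "\<dots> = prob {\<omega> \<in> space M. \<beta> j \<omega> \<in> {a}} *
      prob {\<omega> \<in> space M. (\<Sum>i<n. X i j * z i \<omega>) \<in> {x. a + x \<in> D}}"
    by (rule prob_coefficient_noise[OF j _ D']) simp
  also have "prob {\<omega> \<in> space M. (\<Sum>i<n. X i j * z i \<omega>) \<in> {x. a + x \<in> D}}
      = measure std_normal_distribution {x. a + x \<in> D}"
    by (rule prob_weighted_noise[OF noise_weights_normalized[OF j] D'])
  finally show ?thesis
    by simp
qed

lemma prob_score_given_partner:
  assumes j: "j < p" and paired: "partner j < p" and D: "D \<in> sets borel"
  shows "prob {\<omega> \<in> space M. \<beta> j \<omega> = a \<and> \<beta> (partner j) \<omega> = b \<and> marg_score X n p \<beta> z j \<omega> \<in> D}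
       = prob {\<omega> \<in> space M. \<beta> j \<omega> = a} * prob {\<omega> \<in> space M. \<beta> (partner j) \<omega> = b} *
         measure std_normal_distribution {x. a + \<rho> * b + x \<in> D}"
proof -
  have D': "{x. a + \<rho> * b + x \<in> D} \<in> sets borel"
    using D by measurable
  have "{\<omega> \<in> space M. \<beta> j \<omega> = a \<and> \<beta> (partner j) \<omega> = b \<and> marg_score X n p \<beta> z j \<omega> \<in> D}
      = {\<omega> \<in> space M. \<beta> j \<omega> \<in> {a} \<and> \<beta> (partner j) \<omega> \<in> {b} \<and>
          (\<Sum>i<n. X i j * z i \<omega>) \<in> {x. a + \<rho> * b + x \<in> D}}"
    using marg_score_eq[OF j] paired by (auto simp: add.assoc)
  then show ?thesis
    using prob_two_coefficients_noise[OF j paired partner_neq _ _ D', of "{a}" "{b}"]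
      prob_weighted_noise[OF noise_weights_normalized[OF j] D'] by simp
qed

lemma prob_score_paired:
  assumes j: "j < p" and paired: "partner j < p" and D: "D \<in> sets borel"
  shows "prob {\<omega> \<in> space M. \<beta> j \<omega> = a \<and> marg_score X n p \<beta> z j \<omega> \<in> D}
       = prob {\<omega> \<in> space M. \<beta> j \<omega> = a} *
         ((1 - q) * measure std_normal_distribution {x. a + x \<in> D}
          + q * measure std_normal_distribution {x. a + \<rho> * \<tau> + x \<in> D})"
proof -
  let ?k = "partner j" and ?w = "\<lambda>\<omega>. \<Sum>i<n. X i j * z i \<omega>"
  define E where "E = {\<omega> \<in> space M. \<beta> j \<omega> = a \<and> marg_score X n p \<beta> z j \<omega> \<in> D}"
  have [measurable]: "\<beta> j \<in> borel_measurable M" "\<beta> ?k \<in> borel_measurable M" "?w \<in> borel_measurable M"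
    using coefficient_measurable j paired
      distributed_measurable[OF distributed_weighted_noise[OF noise_weights_normalized[OF j]]] by auto
  note D[measurable]
  have "E = {\<omega> \<in> space M. \<beta> j \<omega> = a \<and> \<beta> j \<omega> + \<rho> * \<beta> ?k \<omega> + ?w \<omega> \<in> D}"
    using marg_score_eq[OF j] paired by (auto simp: E_def)
  then have "E \<in> events"
    by simp
  then have split: "prob E = prob (E \<inter> {\<omega>. \<beta> ?k \<omega> = 0}) + prob (E \<inter> {\<omega>. \<beta> ?k \<omega> = \<tau>})"
    using prob_beta_zero[OF paired] prob_beta_tau[OF paired] tau_nonzero
    by (intro prob_split_two_values) auto
  have slice: "E \<inter> {\<omega>. \<beta> ?k \<omega> = b}
      = {\<omega> \<in> space M. \<beta> j \<omega> = a \<and> \<beta> ?k \<omega> = b \<and> marg_score X n p \<beta> z j \<omega> \<in> D}" for b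
    by (auto simp: E_def)
  show ?thesis
    unfolding E_def[symmetric] split slice prob_score_given_partner[OF j paired D]
      prob_beta_zero[OF paired] prob_beta_tau[OF paired]
    by (simp add: algebra_simps)
qed

lemma sum_prob_score_bounds:
  assumes p: "p \<ge> 1" and q: "q \<le> 1/2" and D: "D \<in> sets borel"
    and prob_a: "\<And>j. j < p \<Longrightarrow> prob {\<omega> \<in> space M. \<beta> j \<omega> = a} = \<pi>"
  defines "F \<equiv> \<pi> * ((1 - q) * measure std_normal_distribution {x. a + x \<in> D}
                     + q * measure std_normal_distribution {x. a + \<rho> * \<tau> + x \<in> D})"
  shows "real (p - 1) * F \<le> (\<Sum>j<p. prob {\<omega> \<in> space M. \<beta> j \<omega> = a \<and> marg_score X n p \<beta> z j \<omega> \<in> D})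
    \<and> (\<Sum>j<p. prob {\<omega> \<in> space M. \<beta> j \<omega> = a \<and> marg_score X n p \<beta> z j \<omega> \<in> D}) \<le> 2 * real p * F"
proof (rule sum_bounds_all_but_last[OF p])
  let ?Q0 = "measure std_normal_distribution {x. a + x \<in> D}"
  let ?f = "\<lambda>j. prob {\<omega> \<in> space M. \<beta> j \<omega> = a \<and> marg_score X n p \<beta> z j \<omega> \<in> D}"
  have "0 \<le> q" "0 \<le> \<pi>"
    using prob_beta_tau[of 0] prob_a[of 0] p by auto
  then have F_nonneg: "0 \<le> F"
    using q unfolding F_def by simp
  have "\<pi> * ?Q0 \<le> (2 * (1 - q)) * (\<pi> * ?Q0)"
    using mult_right_mono[of 1 "2 * (1 - q)" "\<pi> * ?Q0"] q \<open>0 \<le> \<pi>\<close> by simp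
  moreover have "0 \<le> \<pi> * (q * measure std_normal_distribution {x. a + \<rho> * \<tau> + x \<in> D})"
    using \<open>0 \<le> q\<close> \<open>0 \<le> \<pi>\<close> by simp
  ultimately have unpaired_le: "\<pi> * ?Q0 \<le> 2 * F"
    unfolding F_def by (simp add: algebra_simps)
  show "?f j = F" if "j < p - 1" for j
  proof -
    have "j < p" "partner j < p"
      using that partner_le_Suc[of j] by auto
    then show ?thesis
      using prob_score_paired[OF _ _ D] prob_a by (simp add: F_def)
  qed
  show "0 \<le> ?f j \<and> ?f j \<le> 2 * F" if "j < p" for j
  proof (cases "partner j < p")
    case True
    then show ?thesis
      using prob_score_paired[OF that True D] prob_a[OF that] F_nonneg by (simp add: F_def)
  next
    case False
    then show ?thesis
      using prob_score_unpaired[OF that False D] prob_a[OF that] unpaired_le \<open>0 \<le> \<pi>\<close> by simp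
  qed
qed

lemma false_positive_sum_bounds:
  fixes r t :: real
  assumes p: "p \<ge> 1" and q: "q \<le> 1/2" and tau: "\<tau> = sqrt r * sqrt_2ln p"
  defines "F \<equiv> (1 - q) * ((1 - q) * shifted_tail_prob 0 t p + q * shifted_tail_prob (\<rho> * sqrt r) t p)"
  shows "real (p - 1) * F \<le> (\<Sum>j<p. prob {\<omega> \<in> space M. \<beta> j \<omega> = 0 \<and>
            \<bar>marg_score X n p \<beta> z j \<omega>\<bar> > t * sqrt_2ln p})
    \<and> (\<Sum>j<p. prob {\<omega> \<in> space M. \<beta> j \<omega> = 0 \<and>
            \<bar>marg_score X n p \<beta> z j \<omega>\<bar> > t * sqrt_2ln p}) \<le> 2 * real p * F"
proof -
  have "{x. 0 + x \<in> {s. t * sqrt_2ln p < \<bar>s\<bar>}} = {x. t * sqrt_2ln p < \<bar>0 * sqrt_2ln p + x\<bar>}"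
    "{x. 0 + \<rho> * \<tau> + x \<in> {s. t * sqrt_2ln p < \<bar>s\<bar>}}
      = {x. t * sqrt_2ln p < \<bar>(\<rho> * sqrt r) * sqrt_2ln p + x\<bar>}"
    by (auto simp: tau mult.assoc)
  then show ?thesis
    using sum_prob_score_bounds[OF p q _ prob_beta_zero, of "{s. t * sqrt_2ln p < \<bar>s\<bar>}"]
    by (simp add: F_def shifted_tail_prob_def)
qed

lemma false_negative_sum_bounds:
  fixes r t :: real
  assumes p: "p \<ge> 1" and q: "q \<le> 1/2" and tau: "\<tau> = sqrt r * sqrt_2ln p"
  defines "F \<equiv> q * ((1 - q) * shifted_core_prob (sqrt r) t p + q * shifted_core_prob ((1 + \<rho>) * sqrt r) t p)"
  shows "real (p - 1) * F \<le> (\<Sum>j<p. prob {\<omega> \<in> space M. \<beta> j \<omega> = \<tau> \<and>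
            \<not> \<bar>marg_score X n p \<beta> z j \<omega>\<bar> > t * sqrt_2ln p})
    \<and> (\<Sum>j<p. prob {\<omega> \<in> space M. \<beta> j \<omega> = \<tau> \<and>
            \<not> \<bar>marg_score X n p \<beta> z j \<omega>\<bar> > t * sqrt_2ln p}) \<le> 2 * real p * F"
proof -
  have "{x. \<tau> + x \<in> {s. \<not> t * sqrt_2ln p < \<bar>s\<bar>}} = {x. \<bar>sqrt r * sqrt_2ln p + x\<bar> \<le> t * sqrt_2ln p}"
    "{x. \<tau> + \<rho> * \<tau> + x \<in> {s. \<not> t * sqrt_2ln p < \<bar>s\<bar>}}
      = {x. \<bar>((1 + \<rho>) * sqrt r) * sqrt_2ln p + x\<bar> \<le> t * sqrt_2ln p}"
    by (auto simp: tau algebra_simps)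
  then show ?thesis
    using sum_prob_score_bounds[OF p q _ prob_beta_tau, of "{s. \<not> t * sqrt_2ln p < \<bar>s\<bar>}"]
    by (simp add: F_def shifted_core_prob_def)
qed

end

section \<open>Error rates\<close>

lemma has_rate_one_minus_powr:
  assumes "\<theta> > 0"
  shows "has_rate (\<lambda>p. 1 - real p powr (-\<theta>)) 0"
proof (rule has_rate_squeeze[OF has_rate_const[of "1/2"] has_rate_const[of 1]])
  have "(\<lambda>p::nat. real p powr (-\<theta>)) \<longlonglongrightarrow> 0"
    using assms by real_asymp
  then have "eventually (\<lambda>p. real p powr (-\<theta>) < 1/2) sequentially"
    by (rule order_tendstoD(2)) simp
  then show "eventually (\<lambda>p. 1/2 \<le> 1 - real p powr (-\<theta>) \<and> 1 - real p powr (-\<theta>) \<le> 1) sequentially"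
    by eventually_elim simp
qed simp_all

lemma has_rate_false_positive_weight:
  assumes \<theta>: "\<theta> > 0" and t: "t > 0" and r: "r \<ge> 0"
  shows "has_rate (\<lambda>p. (1 - real p powr (-\<theta>)) * ((1 - real p powr (-\<theta>)) * shifted_tail_prob 0 t p
            + real p powr (-\<theta>) * shifted_tail_prob (\<rho> * sqrt r) t p))
           (- min (t\<^sup>2) (\<theta> + (max 0 (t - \<bar>\<rho>\<bar> * sqrt r))\<^sup>2))"
proof -
  have "- min (t\<^sup>2) (\<theta> + (max 0 (t - \<bar>\<rho>\<bar> * sqrt r))\<^sup>2)
      = 0 + max (0 + -(max 0 (t - \<bar>0\<bar>))\<^sup>2) (-\<theta> + -(max 0 (t - \<bar>\<rho> * sqrt r\<bar>))\<^sup>2)"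
    using t r by (simp add: abs_mult min_def)
  then show ?thesis
    using \<theta> t by (simp only:) (intro has_rate_mult has_rate_add has_rate_one_minus_powr has_rate_powr
        has_rate_shifted_tail_prob)
qed

lemma has_rate_false_negative_weight:
  assumes \<theta>: "\<theta> > 0" and t: "t > 0" and r: "r > 0" and \<rho>: "\<rho> > -1"
  shows "has_rate (\<lambda>p. real p powr (-\<theta>) * ((1 - real p powr (-\<theta>)) * shifted_core_prob (sqrt r) t p
            + real p powr (-\<theta>) * shifted_core_prob ((1 + \<rho>) * sqrt r) t p))
           (- min (\<theta> + (max 0 (sqrt r - t))\<^sup>2) (2 * \<theta> + (max 0 ((1 + \<rho>) * sqrt r - t))\<^sup>2))"
proof -
  have "- min (\<theta> + (max 0 (sqrt r - t))\<^sup>2) (2 * \<theta> + (max 0 ((1 + \<rho>) * sqrt r - t))\<^sup>2)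
      = -\<theta> + max (0 + -(max 0 (sqrt r - t))\<^sup>2) (-\<theta> + -(max 0 ((1 + \<rho>) * sqrt r - t))\<^sup>2)"
    by (simp add: min_def)
  then show ?thesis
    using \<theta> t r \<rho> by (simp only:) (intro has_rate_mult has_rate_add has_rate_one_minus_powr has_rate_powr
        has_rate_shifted_core_prob, simp_all)
qed

theorem theoremC1:
  fixes M :: "nat \<Rightarrow> 'a measure"
    and n :: "nat \<Rightarrow> nat"
    and X :: "nat \<Rightarrow> nat \<Rightarrow> nat \<Rightarrow> real"
    and \<beta> z :: "nat \<Rightarrow> nat \<Rightarrow> 'a \<Rightarrow> real"
    and \<rho> \<theta> r t' :: real
  assumes rho: "-1 < \<rho>" "\<rho> < 1"
    and theta: "0 < \<theta>" "\<theta> < 1"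
    and r: "r > 0"
    and t': "t' > 0"
    and prob: "\<And>p. p \<ge> 2 \<Longrightarrow> prob_space (M p)"
    and gram: "\<And>p j k. p \<ge> 2 \<Longrightarrow> j < p \<Longrightarrow> k < p \<Longrightarrow>
               (\<Sum>i<n p. X p i j * X p i k) = block_gram \<rho> j k"
    and indep: "\<And>p. p \<ge> 2 \<Longrightarrow> prob_space.indep_vars (M p) (\<lambda>_. borel)
               (\<lambda>v. case v of Inl j \<Rightarrow> \<beta> p j | Inr i \<Rightarrow> z p i) ({..<p} <+> {..<n p})"
    and noise: "\<And>p i. p \<ge> 2 \<Longrightarrow> i < n p \<Longrightarrow>
               distributed (M p) lborel (z p i) (\<lambda>x. ennreal (std_normal_density x))"
    and beta_nz: "\<And>p j. p \<ge> 2 \<Longrightarrow> j < p \<Longrightarrow>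
               measure (M p) {\<omega> \<in> space (M p). \<beta> p j \<omega> = sqrt (2 * r * ln (real p))}
                 = real p powr (-\<theta>)"
    and beta_z: "\<And>p j. p \<ge> 2 \<Longrightarrow> j < p \<Longrightarrow>
               measure (M p) {\<omega> \<in> space (M p). \<beta> p j \<omega> = 0} = 1 - real p powr (-\<theta>)"
  shows "multi_log (\<lambda>p.
           (\<Sum>j<p. measure (M p) {\<omega> \<in> space (M p). \<beta> p j \<omega> = 0 \<and>
               \<bar>marg_score (X p) (n p) p (\<beta> p) (z p) j \<omega>\<bar> > t' * sqrt (2 * ln (real p))})
           / real p powr (1 - min (t'\<^sup>2) (\<theta> + (max 0 (t' - \<bar>\<rho>\<bar> * sqrt r))\<^sup>2)))
       \<and> multi_log (\<lambda>p.
           (\<Sum>j<p. measure (M p) {\<omega> \<in> space (M p). \<beta> p j \<omega> = sqrt (2 * r * ln (real p)) \<and>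
               \<not> \<bar>marg_score (X p) (n p) p (\<beta> p) (z p) j \<omega>\<bar> > t' * sqrt (2 * ln (real p))})
           / real p powr (1 - min (\<theta> + (max 0 (sqrt r - t'))\<^sup>2)
                                   (2 * \<theta> + (max 0 ((1 + \<rho>) * sqrt r - t'))\<^sup>2)))"
proof -
  define q where "q p = real p powr (-\<theta>)" for p :: nat
  define FP where "FP p = (\<Sum>j<p. measure (M p) {\<omega> \<in> space (M p). \<beta> p j \<omega> = 0 \<and>
      \<bar>marg_score (X p) (n p) p (\<beta> p) (z p) j \<omega>\<bar> > t' * sqrt_2ln p})" for p
  define FN where "FN p = (\<Sum>j<p. measure (M p) {\<omega> \<in> space (M p). \<beta> p j \<omega> = sqrt (2 * r * ln (real p)) \<and>
      \<not> \<bar>marg_score (X p) (n p) p (\<beta> p) (z p) j \<omega>\<bar> > t' * sqrt_2ln p})" for p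
  define G1 where "G1 p = (1 - q p) * ((1 - q p) * shifted_tail_prob 0 t' p
      + q p * shifted_tail_prob (\<rho> * sqrt r) t' p)" for p
  define G2 where "G2 p = q p * ((1 - q p) * shifted_core_prob (sqrt r) t' p
      + q p * shifted_core_prob ((1 + \<rho>) * sqrt r) t' p)" for p
  have model: "marginal_regression_model (M p) (\<beta> p) (z p) p (n p) (X p) \<rho> (sqrt (2 * r * ln (real p))) (q p)"
    if "p \<ge> 2" for p
  proof (intro marginal_regression_model.intro coefficients_and_noise.intro
      marginal_regression_model_axioms.intro coefficients_and_noise_axioms.intro)
    show "sqrt (2 * r * ln (real p)) \<noteq> 0"
      using that r by simp
  qed (use that prob gram indep noise beta_nz beta_z in \<open>simp_all add: q_def\<close>)
  have "(\<lambda>p. q p) \<longlonglongrightarrow> 0"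
    unfolding q_def using theta(1) by real_asymp
  then have "eventually (\<lambda>p. q p < 1/2) sequentially"
    by (rule order_tendstoD(2)) simp
  then have "eventually (\<lambda>p. 2 \<le> p \<and> q p \<le> 1/2) sequentially"
    using eventually_ge_at_top[of 2] by eventually_elim simp
  then have bounds: "eventually (\<lambda>p. (real (p - 1) * G1 p \<le> FP p \<and> FP p \<le> 2 * real p * G1 p)
      \<and> (real (p - 1) * G2 p \<le> FN p \<and> FN p \<le> 2 * real p * G2 p)) sequentially"
  proof eventually_elim
    case (elim p)
    then interpret marginal_regression_model "M p" "\<beta> p" "z p" p "n p" "X p" \<rho> "sqrt (2 * r * ln (real p))" "q p"
      by (intro model) simp
    have "sqrt (2 * r * ln (real p)) = sqrt r * sqrt_2ln p"
      by (simp add: real_sqrt_mult[symmetric] mult_ac)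
    then show ?case
      using false_positive_sum_bounds[of r t'] false_negative_sum_bounds[of r t'] elim
      unfolding FP_def FN_def G1_def G2_def by simp
  qed
  have "has_rate G1 (- min (t'\<^sup>2) (\<theta> + (max 0 (t' - \<bar>\<rho>\<bar> * sqrt r))\<^sup>2))"
    unfolding G1_def q_def using has_rate_false_positive_weight theta(1) t' r by simp
  then have "has_rate FP (1 + - min (t'\<^sup>2) (\<theta> + (max 0 (t' - \<bar>\<rho>\<bar> * sqrt r))\<^sup>2))"
    by (rule has_rate_linear_sandwich) (use bounds in \<open>auto elim: eventually_mono\<close>)
  moreover have "has_rate G2 (- min (\<theta> + (max 0 (sqrt r - t'))\<^sup>2) (2 * \<theta> + (max 0 ((1 + \<rho>) * sqrt r - t'))\<^sup>2))"
    unfolding G2_def q_def using has_rate_false_negative_weight theta(1) t' r rho(1) by simp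
  then have "has_rate FN (1 + - min (\<theta> + (max 0 (sqrt r - t'))\<^sup>2) (2 * \<theta> + (max 0 ((1 + \<rho>) * sqrt r - t'))\<^sup>2))"
    by (rule has_rate_linear_sandwich) (use bounds in \<open>auto elim: eventually_mono\<close>)
  ultimately show ?thesis
    unfolding FP_def FN_def by (auto dest!: has_rate_imp_multi_log)
qed

end
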